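(* If $\Sigma$ is a finite inductive signature, then $\mathcal{J}(\Sigma)=\mathcal{J}^*(\Sigma)$.
   Context: Fix an infinite set $V$ of variables with decidable equality, and a fresh variable provider: functions $\varphi,\mathsf{fr}$ assigning to each finite $X\subseteq V$ an inhabited subset $\varphi(X)\subseteq V\setminus X$ and an element $\mathsf{fr}(X)\in\varphi(X)$. Fix disjoint sets $F$ (function symbols) and $T$ (type symbols) with decidable equality. Preelements are terms built from variables and symbols of $F$; a pretype is $S(t_1,\ldots,t_n)$ with $S\in T$ and $t_i$ preelements. $\mathrm{V}(E)$ is the set of variables of an expression $E$, $\equiv$ is syntactic identity, and $E[\bar a/\bar x]$ is simultaneous substitution. A precontext is a sequence $\Gamma=x_1:A_1,\ldots,x_n:A_n$ of pretypes with $x_k\in\varphi(\{x_1,\ldots,x_{k-1}\})$ and $\mathrm{V}(A_k)\subseteq\{x_1,\ldots,x_{k-1}\}$; $\mathrm{OV}(\Gamma)=x_1,\ldots,x_n$, $\mathrm{V}(\Gamma)=\{x_1,\ldots,x_n\}$, $\mathrm{Fresh}(\Gamma)=\varphi(\mathrm{V}(\Gamma))$, $\mathrm{fresh}(\Gamma)=\mathsf{fr}(\mathrm{V}(\Gamma))$, $E[\bar a/\Gamma]=E[\bar a/x_1,\ldots,x_n]$. Top variables: $\mathrm{TV}(\langle\rangle)=\emptyset$, $\mathrm{TV}(\Gamma,x:A)=(\mathrm{TV}(\Gamma)\setminus\mathrm{V}(A))\cup\{x\}$. A determining sequence for $\Gamma$ is a strictly increasing $\bar i=i_1,\ldots,i_k$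 in $\{1,\ldots,n\}$ with $\mathrm{TV}(\Gamma)\subseteq\{x_{i_1},\ldots,x_{i_k}\}$; for $\bar a=a_1,\ldots,a_n$ put $\bar a_{\bar i}=a_{i_1},\ldots,a_{i_k}$. A type predeclaration is $(\Gamma,S,\bar i)$ with $S\in T$, $\bar i$ determining; a function predeclaration is $(\Gamma,f,\bar i,U)$ with $f\in F$, $\bar i$ determining, $U$ a pretype with $\mathrm{V}(U)\subseteq\mathrm{V}(\Gamma)$. A presignature is a set $\Sigma$ of predeclarations with no symbol declared twice. Judgements are "$\Gamma$ context", "$A$ type $(\Gamma)$", "$a:A\ (\Gamma)$". $\mathcal{J}(\Sigma)$ is the smallest set of judgements closed under: (R1) $\langle\rangle$ context; (R2) from $\Gamma$ context and $A$ type $(\Gamma)$ infer $\Gamma,x:A$ context, for $x\in\mathrm{Fresh}(\Gamma)$; (R3) from $x_1:A_1,\ldots,x_n:A_n$ context infer $x_i:A_i\ (x_1:A_1,\ldots,x_n:A_n)$; (R4) if $(\Gamma,S,\bar i)\in\Sigma$ and $\bar a:\Delta\to\Gamma$, infer $S(\bar a_{\bar i})$ type $(\Delta)$; (R5) if $(\Gamma,f,\bar i,U)\in\Sigma$, $\bar a:\Delta\to\Gamma$ and $U[\bar a/\Gamma]$ type $(\Delta)$, infer $f(\bar a_{\bar i}):U[\bar a/\Gamma]\ (\Delta)$. Here, for $\Gamma=x_1:A_1,\ldots,x_n:A_n$, the context map "$\bar a:\Delta\to\Gamma$" abbreviates the $n+2$ judgements $\Delta$ context, $\Gamma$ context, and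 $a_k:A_k[a_1,\ldots,a_{k-1}/x_1,\ldots,x_{k-1}]\ (\Delta)$ for $k=1,\ldots,n$. $\Sigma$ is a signature if ($\Gamma$ context)$\in\mathcal{J}(\Sigma)$ whenever $(\Gamma,S,\bar i)\in\Sigma$, and ($U$ type $(\Gamma)$)$\in\mathcal{J}(\Sigma)$ whenever $(\Gamma,f,\bar i,U)\in\Sigma$. $\mathcal{J}^*(\Sigma)$ is defined exactly like $\mathcal{J}(\Sigma)$ except that (R5) is replaced by (R5* ): if $(\Gamma,f,\bar i,U)\in\Sigma$ and $\bar a:\Delta\to\Gamma$ (with the context-map judgements now read in $\mathcal{J}^*(\Sigma)$), infer $f(\bar a_{\bar i}):U[\bar a/\Gamma]\ (\Delta)$ (no premiss that $U[\bar a/\Gamma]$ is a type). A signature is inductive if it is obtained from the empty signature by finitely many steps, each adding either a type predeclaration $(\Gamma,S,\bar i)$ with $S$ not yet declared and ($\Gamma$ context)$\in\mathcal{J}$ of the current signature, or a function predeclaration $(\Gamma,f,\bar i,U)$ with $f$ not yet declared and ($U$ type $(\Gamma)$)$\in\mathcal{J}$ of the current signature. *)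

theory Defs
  imports Main
begin

text \<open>Variables: type 'v; function symbols: type 'f; type symbols: type 't.
  F and T are disjoint since they are distinct types; equality is decidable in HOL.\<close>

datatype ('v,'f) pelem = Var 'v | App 'f "('v,'f) pelem list"

datatype ('v,'f,'t) ptype = Ty 't "('v,'f) pelem list"

type_synonym ('v,'f,'t) pctx = "('v \<times> ('v,'f,'t) ptype) list"

fun varsE :: "('v,'f) pelem \<Rightarrow> 'v set" where
  "varsE (Var x) = {x}"
| "varsE (App f ts) = (\<Union>t\<in>set ts. varsE t)"

fun varsT :: "('v,'f,'t) ptype \<Rightarrow> 'v set" where
  "varsT (Ty S ts) = (\<Union>t\<in>set ts. varsE t)"

fun substE :: "('v \<Rightarrow> ('v,'f) pelem) \<Rightarrow> ('v,'f) pelem \<Rightarrow> ('v,'f) pelem" where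
  "substE \<sigma> (Var x) = \<sigma> x"
| "substE \<sigma> (App f ts) = App f (map (substE \<sigma>) ts)"

fun substT :: "('v \<Rightarrow> ('v,'f) pelem) \<Rightarrow> ('v,'f,'t) ptype \<Rightarrow> ('v,'f,'t) ptype" where
  "substT \<sigma> (Ty S ts) = Ty S (map (substE \<sigma>) ts)"

definition sub :: "('v,'f) pelem list \<Rightarrow> 'v list \<Rightarrow> 'v \<Rightarrow> ('v,'f) pelem" where
  "sub as xs y = (case map_of (zip xs as) y of Some a \<Rightarrow> a | None \<Rightarrow> Var y)"

definition OV :: "('v,'f,'t) pctx \<Rightarrow> 'v list" where
  "OV \<Gamma> = map fst \<Gamma>"

definition VC :: "('v,'f,'t) pctx \<Rightarrow> 'v set" where
  "VC \<Gamma> = set (OV \<Gamma>)"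

definition substCtxT :: "('v,'f,'t) ptype \<Rightarrow> ('v,'f) pelem list \<Rightarrow> ('v,'f,'t) pctx \<Rightarrow> ('v,'f,'t) ptype" where
  "substCtxT U as \<Gamma> = substT (sub as (OV \<Gamma>)) U"

definition fresh_provider :: "('v set \<Rightarrow> 'v set) \<Rightarrow> ('v set \<Rightarrow> 'v) \<Rightarrow> bool" where
  "fresh_provider \<phi> fr \<longleftrightarrow>
     (\<forall>X. finite X \<longrightarrow> \<phi> X \<subseteq> - X \<and> \<phi> X \<noteq> {} \<and> fr X \<in> \<phi> X)"

definition precontext :: "('v set \<Rightarrow> 'v set) \<Rightarrow> ('v,'f,'t) pctx \<Rightarrow> bool" where
  "precontext \<phi> \<Gamma> \<longleftrightarrow>
     (\<forall>k < length \<Gamma>. fst (\<Gamma>!k) \<in> \<phi> (set (map fst (take k \<Gamma>)))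
                     \<and> varsT (snd (\<Gamma>!k)) \<subseteq> set (map fst (take k \<Gamma>)))"

definition TV :: "('v,'f,'t) pctx \<Rightarrow> 'v set" where
  "TV \<Gamma> = foldl (\<lambda>S (x,A). (S - varsT A) \<union> {x}) {} \<Gamma>"

text \<open>Determining sequences, with 1-based indices i_1 < ... < i_k in {1..n}.\<close>
definition determining :: "('v,'f,'t) pctx \<Rightarrow> nat list \<Rightarrow> bool" where
  "determining \<Gamma> is \<longleftrightarrow> sorted_wrt (<) is \<and> set is \<subseteq> {1..length \<Gamma>}
     \<and> TV \<Gamma> \<subseteq> {fst (\<Gamma>!(i-1)) | i. i \<in> set is}"

definition select :: "'a list \<Rightarrow> nat list \<Rightarrow> 'a list" where
  "select as is = map (\<lambda>i. as!(i-1)) is"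

datatype ('v,'f,'t) decl =
    TDecl "('v,'f,'t) pctx" 't "nat list"
  | FDecl "('v,'f,'t) pctx" 'f "nat list" "('v,'f,'t) ptype"

fun predecl :: "('v set \<Rightarrow> 'v set) \<Rightarrow> ('v,'f,'t) decl \<Rightarrow> bool" where
  "predecl \<phi> (TDecl \<Gamma> S is) \<longleftrightarrow> precontext \<phi> \<Gamma> \<and> determining \<Gamma> is"
| "predecl \<phi> (FDecl \<Gamma> f is U) \<longleftrightarrow> precontext \<phi> \<Gamma> \<and> determining \<Gamma> is \<and> varsT U \<subseteq> VC \<Gamma>"

definition tsym_declared :: "('v,'f,'t) decl set \<Rightarrow> 't \<Rightarrow> bool" where
  "tsym_declared \<Sigma> S \<longleftrightarrow> (\<exists>\<Gamma> is. TDecl \<Gamma> S is \<in> \<Sigma>)"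

definition fsym_declared :: "('v,'f,'t) decl set \<Rightarrow> 'f \<Rightarrow> bool" where
  "fsym_declared \<Sigma> f \<longleftrightarrow> (\<exists>\<Gamma> is U. FDecl \<Gamma> f is U \<in> \<Sigma>)"

datatype ('v,'f,'t) judgement =
    IsCtx "('v,'f,'t) pctx"
  | IsType "('v,'f,'t) pctx" "('v,'f,'t) ptype"
  | HasType "('v,'f,'t) pctx" "('v,'f) pelem" "('v,'f,'t) ptype"

text \<open>Generic derivation system: with strict = True it is J(Sigma) (rule R5 with the premiss
  that U[a/Gamma] is a type), with strict = False it is J*(Sigma) (rule R5* without it).
  The context map "as : Delta -> Gamma" is written out inline in R4 and R5.\<close>
inductive_set Jgen :: "bool \<Rightarrow> ('v set \<Rightarrow> 'v set) \<Rightarrow> ('v,'f,'t) decl set \<Rightarrow> ('v,'f,'t) judgement set"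
  for strict :: bool and \<phi> :: "'v set \<Rightarrow> 'v set" and \<Sigma> :: "('v,'f,'t) decl set" where
  R1: "IsCtx [] \<in> Jgen strict \<phi> \<Sigma>"
| R2: "\<lbrakk> IsCtx \<Gamma> \<in> Jgen strict \<phi> \<Sigma>; IsType \<Gamma> A \<in> Jgen strict \<phi> \<Sigma>; x \<in> \<phi> (VC \<Gamma>) \<rbrakk>
       \<Longrightarrow> IsCtx (\<Gamma> @ [(x, A)]) \<in> Jgen strict \<phi> \<Sigma>"
| R3: "\<lbrakk> IsCtx \<Gamma> \<in> Jgen strict \<phi> \<Sigma>; i < length \<Gamma> \<rbrakk>
       \<Longrightarrow> HasType \<Gamma> (Var (fst (\<Gamma>!i))) (snd (\<Gamma>!i)) \<in> Jgen strict \<phi> \<Sigma>"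
| R4: "\<lbrakk> TDecl \<Gamma> S is \<in> \<Sigma>;
         IsCtx \<Delta> \<in> Jgen strict \<phi> \<Sigma>; IsCtx \<Gamma> \<in> Jgen strict \<phi> \<Sigma>; length as = length \<Gamma>;
         \<forall>k < length \<Gamma>. HasType \<Delta> (as!k)
             (substT (sub (take k as) (take k (OV \<Gamma>))) (snd (\<Gamma>!k))) \<in> Jgen strict \<phi> \<Sigma> \<rbrakk>
       \<Longrightarrow> IsType \<Delta> (Ty S (select as is)) \<in> Jgen strict \<phi> \<Sigma>"
| R5: "\<lbrakk> FDecl \<Gamma> f is U \<in> \<Sigma>;
         IsCtx \<Delta> \<in> Jgen strict \<phi> \<Sigma>; IsCtx \<Gamma> \<in> Jgen strict \<phi> \<Sigma>; length as = length \<Gamma>;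
         \<forall>k < length \<Gamma>. HasType \<Delta> (as!k)
             (substT (sub (take k as) (take k (OV \<Gamma>))) (snd (\<Gamma>!k))) \<in> Jgen strict \<phi> \<Sigma>;
         strict \<longrightarrow> IsType \<Delta> (substCtxT U as \<Gamma>) \<in> Jgen strict \<phi> \<Sigma> \<rbrakk>
       \<Longrightarrow> HasType \<Delta> (App f (select as is)) (substCtxT U as \<Gamma>) \<in> Jgen strict \<phi> \<Sigma>"

definition J :: "('v set \<Rightarrow> 'v set) \<Rightarrow> ('v,'f,'t) decl set \<Rightarrow> ('v,'f,'t) judgement set" where
  "J \<phi> \<Sigma> = Jgen True \<phi> \<Sigma>"

definition Jstar :: "('v set \<Rightarrow> 'v set) \<Rightarrow> ('v,'f,'t) decl set \<Rightarrow> ('v,'f,'t) judgement set" where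
  "Jstar \<phi> \<Sigma> = Jgen False \<phi> \<Sigma>"

inductive inductive_sig :: "('v set \<Rightarrow> 'v set) \<Rightarrow> ('v,'f,'t) decl set \<Rightarrow> bool"
  for \<phi> :: "'v set \<Rightarrow> 'v set" where
  empty: "inductive_sig \<phi> {}"
| addT: "\<lbrakk> inductive_sig \<phi> \<Sigma>; predecl \<phi> (TDecl \<Gamma> S is); \<not> tsym_declared \<Sigma> S;
          IsCtx \<Gamma> \<in> J \<phi> \<Sigma> \<rbrakk> \<Longrightarrow> inductive_sig \<phi> (insert (TDecl \<Gamma> S is) \<Sigma>)"
| addF: "\<lbrakk> inductive_sig \<phi> \<Sigma>; predecl \<phi> (FDecl \<Gamma> f is U); \<not> fsym_declared \<Sigma> f;
          IsType \<Gamma> U \<in> J \<phi> \<Sigma> \<rbrakk> \<Longrightarrow> inductive_sig \<phi> (insert (FDecl \<Gamma> f is U) \<Sigma>)"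

end

theory Submission
  imports Defs
begin

text \<open>
  Every judgement of \<open>J\<^sup>*(\<Sigma>)\<close> is in \<open>J(\<Sigma>)\<close> as soon as the extra premiss of (R5) is derivable
  in \<open>J(\<Sigma>)\<close>. That premiss says that \<open>U[a/\<Gamma>]\<close> is a type in \<open>\<Delta>\<close>, given \<open>a : \<Delta> \<rightarrow> \<Gamma>\<close>. For an
  inductive signature \<open>U\<close> is a type in \<open>\<Gamma>\<close>, so it suffices that \<open>J(\<Sigma>)\<close> is closed under
  substitution along context maps, which is proved by rule induction; in the cases (R4) and (R5)
  one composes the context map of the premisses with the given one.
\<close>

lemma substE_cong: "(\<And>y. y \<in> varsE t \<Longrightarrow> \<sigma> y = \<tau> y) \<Longrightarrow> substE \<sigma> t = substE \<tau> t"
  by (induction t) auto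

lemma substT_cong: "(\<And>y. y \<in> varsT A \<Longrightarrow> \<sigma> y = \<tau> y) \<Longrightarrow> substT \<sigma> A = substT \<tau> A"
  by (cases A) (auto intro: substE_cong)

lemma substE_comp: "substE \<sigma> (substE \<tau> t) = substE (\<lambda>y. substE \<sigma> (\<tau> y)) t"
  by (induction t) auto

lemma substT_comp: "substT \<sigma> (substT \<tau> A) = substT (\<lambda>y. substE \<sigma> (\<tau> y)) A"
  by (cases A) (auto simp: substE_comp)

lemma substE_sub:
  assumes "length bs = length xs" "y \<in> set xs"
  shows "substE \<sigma> (sub bs xs y) = sub (map (substE \<sigma>) bs) xs y"
proof -
  obtain b where b: "map_of (zip xs bs) y = Some b"
    using assms by (cases "map_of (zip xs bs) y") (auto simp: map_of_zip_is_None)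
  then have "map_of (zip xs (map (substE \<sigma>) bs)) y = Some (substE \<sigma> b)"
    by (simp add: zip_map2 map_of_map)
  with b show ?thesis by (simp add: sub_def)
qed

lemma substT_substT_sub:
  assumes "length bs = length xs" "varsT A \<subseteq> set xs"
  shows "substT \<sigma> (substT (sub bs xs) A) = substT (sub (map (substE \<sigma>) bs) xs) A"
  unfolding substT_comp using assms by (auto intro!: substT_cong substE_sub)

lemma sub_nth:
  assumes "distinct xs" "i < length xs" "length as = length xs"
  shows "sub as xs (xs!i) = as!i"
  using assms by (simp add: sub_def map_of_zip_nth)

lemma sub_take:
  assumes "y \<in> set (take i xs)" "length as = length xs"
  shows "sub as xs y = sub (take i as) (take i xs) y"
proof -
  have tz: "zip (take i xs) (take i as) = take i (zip xs as)" by (simp add: take_zip)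
  then have "y \<in> fst ` set (take i (zip xs as))"
    using assms by (metis length_take map_fst_zip set_map)
  then obtain v where v: "map_of (take i (zip xs as)) y = Some v"
    by (metis map_of_eq_None_iff option.exhaust)
  then have "map_of (take i (zip xs as) @ drop i (zip xs as)) y = Some v"
    unfolding map_of_append by (rule map_add_find_right)
  with v tz show ?thesis by (simp add: sub_def)
qed

lemma map_select:
  assumes "set is \<subseteq> {1..length as}"
  shows "map f (select as is) = select (map f as) is"
  using assms by (force simp: select_def)

definition ctx_map ::
  "('v,'f,'t) judgement set \<Rightarrow> ('v,'f,'t) pctx \<Rightarrow> ('v,'f) pelem list \<Rightarrow> ('v,'f,'t) pctx \<Rightarrow> bool" where
  "ctx_map \<J> \<Delta> as \<Gamma> \<longleftrightarrow> IsCtx \<Delta> \<in> \<J> \<and> IsCtx \<Gamma> \<in> \<J> \<and> length as = length \<Gamma> \<and>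
     (\<forall>k<length \<Gamma>. HasType \<Delta> (as!k) (substT (sub (take k as) (take k (OV \<Gamma>))) (snd (\<Gamma>!k))) \<in> \<J>)"

lemma Jgen_R4_ctx_map:
  "TDecl \<Gamma> S is \<in> \<Sigma> \<Longrightarrow> ctx_map (Jgen s \<phi> \<Sigma>) \<Delta> as \<Gamma> \<Longrightarrow> IsType \<Delta> (Ty S (select as is)) \<in> Jgen s \<phi> \<Sigma>"
  unfolding ctx_map_def by (blast intro: Jgen.R4)

lemma Jgen_R5_ctx_map:
  "FDecl \<Gamma> f is U \<in> \<Sigma> \<Longrightarrow> ctx_map (Jgen s \<phi> \<Sigma>) \<Delta> as \<Gamma> \<Longrightarrow>
   (s \<Longrightarrow> IsType \<Delta> (substCtxT U as \<Gamma>) \<in> Jgen s \<phi> \<Sigma>) \<Longrightarrow>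
   HasType \<Delta> (App f (select as is)) (substCtxT U as \<Gamma>) \<in> Jgen s \<phi> \<Sigma>"
  unfolding ctx_map_def by (blast intro: Jgen.R5)

lemma Jgen_mono:
  assumes "\<Sigma> \<subseteq> \<Sigma>'" and "s' \<Longrightarrow> s"
  shows "Jgen s \<phi> \<Sigma> \<subseteq> Jgen s' \<phi> \<Sigma>'"
proof
  fix j assume "j \<in> Jgen s \<phi> \<Sigma>"
  then show "j \<in> Jgen s' \<phi> \<Sigma>'"
  proof (induction rule: Jgen.induct)
    case (R4 \<Gamma> S "is" \<Delta> as)
    then show ?case using assms by (intro Jgen_R4_ctx_map) (auto simp: ctx_map_def)
  next
    case (R5 \<Gamma> f "is" U \<Delta> as)
    then show ?case using assms by (intro Jgen_R5_ctx_map) (auto simp: ctx_map_def)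
  qed (auto intro: Jgen.intros)
qed

definition wf_ctx :: "('v,'f,'t) pctx \<Rightarrow> bool" where
  "wf_ctx \<Gamma> \<longleftrightarrow> distinct (OV \<Gamma>) \<and> (\<forall>k<length \<Gamma>. varsT (snd (\<Gamma>!k)) \<subseteq> set (take k (OV \<Gamma>)))"

fun well_scoped :: "('v,'f,'t) judgement \<Rightarrow> bool" where
  "well_scoped (IsCtx \<Gamma>) = wf_ctx \<Gamma>"
| "well_scoped (IsType \<Gamma> A) = (varsT A \<subseteq> VC \<Gamma>)"
| "well_scoped (HasType \<Gamma> a A) = (varsE a \<subseteq> VC \<Gamma>)"

lemma wf_ctx_snoc:
  assumes "wf_ctx \<Gamma>" "x \<notin> VC \<Gamma>" "varsT A \<subseteq> VC \<Gamma>"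
  shows "wf_ctx (\<Gamma> @ [(x, A)])"
proof -
  have "varsT (snd ((\<Gamma> @ [(x, A)])!k)) \<subseteq> set (take k (OV \<Gamma> @ [x]))"
    if "k < Suc (length \<Gamma>)" for k
    using that assms by (cases "k < length \<Gamma>") (auto simp: nth_append wf_ctx_def VC_def OV_def)
  with assms show ?thesis by (auto simp: wf_ctx_def VC_def OV_def)
qed

lemma vars_select:
  assumes "set is \<subseteq> {1..length as}" "\<forall>k<length as. varsE (as!k) \<subseteq> X"
  shows "(\<Union>t\<in>set (select as is). varsE t) \<subseteq> X"
proof -
  have "i - 1 < length as" if "i \<in> set is" for i
    using that assms(1) by force
  with assms(2) show ?thesis by (force simp: select_def)
qed

lemma Jgen_well_scoped:
  assumes "fresh_provider \<phi> fr" and "\<forall>d\<in>\<Sigma>. predecl \<phi> d" and "j \<in> Jgen s \<phi> \<Sigma>"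
  shows "well_scoped j"
  using assms(3)
proof (induction rule: Jgen.induct)
  case R1 then show ?case by (simp add: wf_ctx_def OV_def)
next
  case (R2 \<Gamma> A x)
  have "x \<notin> VC \<Gamma>"
    using \<open>x \<in> \<phi> (VC \<Gamma>)\<close> assms(1) by (force simp: fresh_provider_def VC_def)
  with R2 show ?case by (simp add: wf_ctx_snoc)
next
  case (R3 \<Gamma> i) then show ?case by (simp add: VC_def OV_def)
next
  case (R4 \<Gamma> S "is" \<Delta> as)
  then have "set is \<subseteq> {1..length as}" using assms(2) by (fastforce simp: determining_def)
  moreover have "\<forall>k<length as. varsE (as!k) \<subseteq> VC \<Delta>" using R4 by auto
  ultimately show ?case by (simp add: vars_select)
next
  case (R5 \<Gamma> f "is" U \<Delta> as)
  then have "set is \<subseteq> {1..length as}" using assms(2) by (fastforce simp: determining_def)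
  moreover have "\<forall>k<length as. varsE (as!k) \<subseteq> VC \<Delta>" using R5 by auto
  ultimately show ?case by (simp add: vars_select)
qed

fun subst_admissible :: "('v,'f,'t) judgement set \<Rightarrow> ('v,'f,'t) judgement \<Rightarrow> bool" where
  "subst_admissible \<J> (IsCtx \<Gamma>) = True"
| "subst_admissible \<J> (IsType \<Gamma> A) =
     (\<forall>\<Delta> as. ctx_map \<J> \<Delta> as \<Gamma> \<longrightarrow> IsType \<Delta> (substT (sub as (OV \<Gamma>)) A) \<in> \<J>)"
| "subst_admissible \<J> (HasType \<Gamma> a A) =
     (\<forall>\<Delta> as. ctx_map \<J> \<Delta> as \<Gamma> \<longrightarrow>
        HasType \<Delta> (substE (sub as (OV \<Gamma>)) a) (substT (sub as (OV \<Gamma>)) A) \<in> \<J>)"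

lemma ctx_map_substE:
  assumes "wf_ctx \<Theta>" "length bs = length \<Theta>" "IsCtx \<Delta> \<in> \<J>" "IsCtx \<Theta> \<in> \<J>"
    and "\<forall>k<length \<Theta>. HasType \<Delta> (substE \<sigma> (bs!k))
           (substT \<sigma> (substT (sub (take k bs) (take k (OV \<Theta>))) (snd (\<Theta>!k)))) \<in> \<J>"
  shows "ctx_map \<J> \<Delta> (map (substE \<sigma>) bs) \<Theta>"
proof -
  have "substT \<sigma> (substT (sub (take k bs) (take k (OV \<Theta>))) (snd (\<Theta>!k)))
      = substT (sub (take k (map (substE \<sigma>) bs)) (take k (OV \<Theta>))) (snd (\<Theta>!k))"
    if "k < length \<Theta>" for k
    using that assms(1,2) by (subst substT_substT_sub) (auto simp: wf_ctx_def OV_def take_map)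
  with assms show ?thesis by (simp add: ctx_map_def)
qed

lemma J_subst_admissible:
  assumes fp: "fresh_provider \<phi> fr" and pd: "\<forall>d\<in>\<Sigma>. predecl \<phi> d" and "j \<in> J \<phi> \<Sigma>"
  shows "subst_admissible (J \<phi> \<Sigma>) j"
  using assms(3) unfolding J_def
proof (induction rule: Jgen.induct)
  case (R3 \<Gamma> i)
  have wf: "wf_ctx \<Gamma>" using Jgen_well_scoped[OF fp pd R3(1)] by simp
  show ?case
  proof (intro subst_admissible.simps(3)[THEN iffD2] allI impI)
    fix \<Delta> as assume cm: "ctx_map (Jgen True \<phi> \<Sigma>) \<Delta> as \<Gamma>"
    then have len: "length as = length (OV \<Gamma>)" by (simp add: ctx_map_def OV_def)
    have "sub as (OV \<Gamma>) (fst (\<Gamma>!i)) = as!i"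
      using sub_nth[OF _ _ len, of i] wf R3(2) by (simp add: wf_ctx_def OV_def)
    moreover have "substT (sub as (OV \<Gamma>)) (snd (\<Gamma>!i))
        = substT (sub (take i as) (take i (OV \<Gamma>))) (snd (\<Gamma>!i))"
      using wf R3(2) len by (auto simp: wf_ctx_def intro!: substT_cong sub_take)
    ultimately show "HasType \<Delta> (substE (sub as (OV \<Gamma>)) (Var (fst (\<Gamma>!i))))
        (substT (sub as (OV \<Gamma>)) (snd (\<Gamma>!i))) \<in> Jgen True \<phi> \<Sigma>"
      using cm R3(2) by (simp add: ctx_map_def)
  qed
next
  case (R4 \<Theta> S "is" \<Gamma> bs)
  have wf: "wf_ctx \<Theta>" using Jgen_well_scoped[OF fp pd R4(3)] by simp
  have det: "determining \<Theta> is" using pd R4(1) by fastforce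
  show ?case
  proof (intro subst_admissible.simps(2)[THEN iffD2] allI impI)
    fix \<Delta> as assume cm: "ctx_map (Jgen True \<phi> \<Sigma>) \<Delta> as \<Gamma>"
    let ?\<sigma> = "sub as (OV \<Gamma>)"
    have "ctx_map (Jgen True \<phi> \<Sigma>) \<Delta> (map (substE ?\<sigma>) bs) \<Theta>"
      using wf R4 cm by (intro ctx_map_substE) (auto simp: ctx_map_def)
    then have "IsType \<Delta> (Ty S (select (map (substE ?\<sigma>) bs) is)) \<in> Jgen True \<phi> \<Sigma>"
      by (rule Jgen_R4_ctx_map[OF R4(1)])
    with det R4(4) show "IsType \<Delta> (substT ?\<sigma> (Ty S (select bs is))) \<in> Jgen True \<phi> \<Sigma>"
      by (simp add: map_select determining_def)
  qed
next
  case (R5 \<Theta> f "is" U \<Gamma> bs)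
  have wf: "wf_ctx \<Theta>" using Jgen_well_scoped[OF fp pd R5(3)] by simp
  have det: "determining \<Theta> is" and U: "varsT U \<subseteq> VC \<Theta>" using pd R5(1) by fastforce+
  show ?case
  proof (intro subst_admissible.simps(3)[THEN iffD2] allI impI)
    fix \<Delta> as assume cm: "ctx_map (Jgen True \<phi> \<Sigma>) \<Delta> as \<Gamma>"
    let ?\<sigma> = "sub as (OV \<Gamma>)"
    have U_subst: "substT ?\<sigma> (substCtxT U bs \<Theta>) = substCtxT U (map (substE ?\<sigma>) bs) \<Theta>"
      using R5(4) U unfolding substCtxT_def by (intro substT_substT_sub) (auto simp: OV_def VC_def)
    have "ctx_map (Jgen True \<phi> \<Sigma>) \<Delta> (map (substE ?\<sigma>) bs) \<Theta>"
      using wf R5 cm by (intro ctx_map_substE) (auto simp: ctx_map_def)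
    moreover have "IsType \<Delta> (substCtxT U (map (substE ?\<sigma>) bs) \<Theta>) \<in> Jgen True \<phi> \<Sigma>"
      using R5.IH(4) cm U_subst by (metis subst_admissible.simps(2) substCtxT_def)
    ultimately have "HasType \<Delta> (App f (select (map (substE ?\<sigma>) bs) is))
        (substCtxT U (map (substE ?\<sigma>) bs) \<Theta>) \<in> Jgen True \<phi> \<Sigma>"
      by (rule Jgen_R5_ctx_map[OF R5(1)])
    with det R5(4) show "HasType \<Delta> (substE ?\<sigma> (App f (select bs is)))
        (substT ?\<sigma> (substCtxT U bs \<Theta>)) \<in> Jgen True \<phi> \<Sigma>"
      by (simp add: map_select determining_def U_subst)
  qed
qed simp_all

definition signature :: "('v set \<Rightarrow> 'v set) \<Rightarrow> ('v,'f,'t) decl set \<Rightarrow> bool" where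
  "signature \<phi> \<Sigma> \<longleftrightarrow> (\<forall>d\<in>\<Sigma>. predecl \<phi> d)
     \<and> (\<forall>\<Gamma> S is. TDecl \<Gamma> S is \<in> \<Sigma> \<longrightarrow> IsCtx \<Gamma> \<in> J \<phi> \<Sigma>)
     \<and> (\<forall>\<Gamma> f is U. FDecl \<Gamma> f is U \<in> \<Sigma> \<longrightarrow> IsType \<Gamma> U \<in> J \<phi> \<Sigma>)"

lemma inductive_sig_signature: "inductive_sig \<phi> \<Sigma> \<Longrightarrow> signature \<phi> \<Sigma>"
proof (induction rule: inductive_sig.induct)
  case empty then show ?case by (simp add: signature_def)
next
  case (addT \<Sigma> \<Gamma> S "is")
  have "J \<phi> \<Sigma> \<subseteq> J \<phi> (insert (TDecl \<Gamma> S is) \<Sigma>)" unfolding J_def by (rule Jgen_mono) auto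
  with addT show ?case unfolding signature_def by blast
next
  case (addF \<Sigma> \<Gamma> f "is" U)
  have "J \<phi> \<Sigma> \<subseteq> J \<phi> (insert (FDecl \<Gamma> f is U) \<Sigma>)" unfolding J_def by (rule Jgen_mono) auto
  with addF show ?case unfolding signature_def by blast
qed

lemma signature_Jstar_subset_J:
  assumes fp: "fresh_provider \<phi> fr" and sig: "signature \<phi> \<Sigma>"
  shows "Jstar \<phi> \<Sigma> \<subseteq> J \<phi> \<Sigma>"
proof
  have pd: "\<forall>d\<in>\<Sigma>. predecl \<phi> d" using sig by (simp add: signature_def)
  fix j assume "j \<in> Jstar \<phi> \<Sigma>"
  then show "j \<in> J \<phi> \<Sigma>" unfolding Jstar_def J_def
  proof (induction rule: Jgen.induct)
    case (R4 \<Gamma> S "is" \<Delta> as)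
    then show ?case by (intro Jgen_R4_ctx_map) (auto simp: ctx_map_def)
  next
    case (R5 \<Gamma> f "is" U \<Delta> as)
    then have cm: "ctx_map (J \<phi> \<Sigma>) \<Delta> as \<Gamma>" by (auto simp: ctx_map_def J_def)
    have "IsType \<Gamma> U \<in> J \<phi> \<Sigma>" using sig R5(1) by (simp add: signature_def)
    then have "IsType \<Delta> (substCtxT U as \<Gamma>) \<in> J \<phi> \<Sigma>"
      using J_subst_admissible[OF fp pd] cm by (fastforce simp: substCtxT_def)
    with cm R5(1) show ?case by (intro Jgen_R5_ctx_map) (auto simp: J_def)
  qed (auto intro: Jgen.intros)
qed

theorem mainTheorem7:
  fixes \<phi> :: "'v set \<Rightarrow> 'v set" and fr :: "'v set \<Rightarrow> 'v"
    and \<Sigma> :: "('v,'f,'t) decl set"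
  assumes "infinite (UNIV :: 'v set)"
    and "fresh_provider \<phi> fr"
    and "inductive_sig \<phi> \<Sigma>"
    and "finite \<Sigma>"
  shows "J \<phi> \<Sigma> = Jstar \<phi> \<Sigma>"
proof
  show "J \<phi> \<Sigma> \<subseteq> Jstar \<phi> \<Sigma>" unfolding J_def Jstar_def by (rule Jgen_mono) auto
  show "Jstar \<phi> \<Sigma> \<subseteq> J \<phi> \<Sigma>"
    using signature_Jstar_subset_J[OF assms(2) inductive_sig_signature[OF assms(3)]] .
qed

end
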